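(* Let $n\ge4$ be even. The map $\rho:\mathcal F_{n-2}\to Y_1$, $z\mapsto w_0zs_{n-1}w_0$, is an order-preserving one-to-one mapping (onto $Y_1$) with respect to the Bruhat orders.
   Context: $s_i=(i,i+1)$; permutations compose right to left. For even $m$, $\mathcal F_m$ is the set of fixed-point-free involutions of $S_m$ with conjugation action and height $\ell/2$; its Bruhat order is the weakest partial order with $z\le tzt$ for transpositions $t$ with $\ell(z)\le\ell(tzt)$. Regard $\mathcal F_{n-2}\subset S_n$ (fixing $n-1,n$); $w_0$ is the longest element of $S_n$; $Y_1=\rho(\mathcal F_{n-2})\subseteq\mathcal F_n$, with the Bruhat order of $\mathcal F_n$ restricted. *)

theory Defs
  imports "HOL-Combinatorics.Combinatorics"
begin

text \<open>Permutations of {1..m} are functions nat => nat that permute {1..m}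
  (identity elsewhere); composition is right to left (function composition).
  Hence S_{n-2} is regarded as a subset of S_n fixing n-1 and n.\<close>

definition S :: "nat \<Rightarrow> (nat \<Rightarrow> nat) set" where
  "S m = {p. p permutes {1..m}}"

definition len :: "nat \<Rightarrow> (nat \<Rightarrow> nat) \<Rightarrow> nat" where
  "len m p = card {(i, j). 1 \<le> i \<and> i < j \<and> j \<le> m \<and> p j < p i}"

definition s :: "nat \<Rightarrow> nat \<Rightarrow> nat" where
  "s i = transpose i (i + 1)"

definition F :: "nat \<Rightarrow> (nat \<Rightarrow> nat) set" where
  "F m = {z \<in> S m. z \<circ> z = id \<and> (\<forall>i \<in> {1..m}. z i \<noteq> i)}"

definition transpositions :: "nat \<Rightarrow> (nat \<Rightarrow> nat) set" where
  "transpositions m = {transpose i j | i j. 1 \<le> i \<and> i < j \<and> j \<le> m}"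

definition bruhat_step :: "nat \<Rightarrow> (nat \<Rightarrow> nat) \<Rightarrow> (nat \<Rightarrow> nat) \<Rightarrow> bool" where
  "bruhat_step m z z' \<longleftrightarrow> z \<in> F m \<and>
     (\<exists>t \<in> transpositions m. z' = t \<circ> z \<circ> t \<and> len m z \<le> len m z')"

definition bruhatF :: "nat \<Rightarrow> (nat \<Rightarrow> nat) \<Rightarrow> (nat \<Rightarrow> nat) \<Rightarrow> bool" where
  "bruhatF m z z' \<longleftrightarrow> z \<in> F m \<and> z' \<in> F m \<and> (bruhat_step m)\<^sup>*\<^sup>* z z'"

definition w0 :: "nat \<Rightarrow> nat \<Rightarrow> nat" where
  "w0 n = (\<lambda>i. if 1 \<le> i \<and> i \<le> n then n + 1 - i else i)"

definition rho :: "nat \<Rightarrow> (nat \<Rightarrow> nat) \<Rightarrow> (nat \<Rightarrow> nat)" where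
  "rho n z = w0 n \<circ> z \<circ> s (n - 1) \<circ> w0 n"

definition Y1 :: "nat \<Rightarrow> (nat \<Rightarrow> nat) set" where
  "Y1 n = rho n ` F (n - 2)"

end

theory Submission
  imports Defs
begin

text \<open>Write \<open>n = m + 2\<close>, so that \<open>\<rho> z = w\<^sub>0 (z s\<^sub>m\<^sub>+\<^sub>1) w\<^sub>0\<close>. Each of the two
  operations maps fixed-point-free involutions to fixed-point-free involutions and a
  generating step \<open>z \<rightarrow> t z t\<close> of the Bruhat order to a generating step. Right
  multiplication by \<open>s\<^sub>m\<^sub>+\<^sub>1\<close> commutes with every permutation of \<open>{1..m}\<close>, so it sends
  \<open>t z t\<close> to \<open>t (z s\<^sub>m\<^sub>+\<^sub>1) t\<close>, and it adds exactly the inversion \<open>(m+1, m+2)\<close>, so all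
  lengths grow by one. Conjugation by the involution \<open>w\<^sub>0\<close> sends transpositions to
  transpositions and preserves the number of inversions, via the reflection
  \<open>(i, j) \<mapsto> (n+1-j, n+1-i)\<close> of pairs. Injectivity holds since \<open>w\<^sub>0\<close> and \<open>s\<^sub>m\<^sub>+\<^sub>1\<close> are
  invertible.\<close>

lemma rtranclp_map:
  assumes "\<And>x y. r x y \<Longrightarrow> r' (f x) (f y)" and "r\<^sup>*\<^sup>* x y"
  shows "r'\<^sup>*\<^sup>* (f x) (f y)"
  using assms(2) by induction (auto intro: rtranclp.rtrancl_into_rtrancl assms(1))

lemma permutes_comp_transpose_commute:
  assumes "p permutes A" "a \<notin> A" "b \<notin> A"
  shows "p \<circ> transpose a b = transpose a b \<circ> p"
proof
  fix x
  have "p x \<in> A \<longleftrightarrow> x \<in> A"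
    using assms(1) by (simp add: permutes_in_image)
  then show "(p \<circ> transpose a b) x = (transpose a b \<circ> p) x"
    using assms by (auto simp: transpose_def permutes_not_in)
qed

lemma F_permutes: "z \<in> F n \<Longrightarrow> z permutes {1..n}"
  by (simp add: F_def S_def)

lemma transpositions_permutes: "t \<in> transpositions n \<Longrightarrow> t permutes {1..n}"
  by (auto simp: transpositions_def intro: permutes_swap_id)

lemma transpositions_mono: "m \<le> n \<Longrightarrow> transpositions m \<subseteq> transpositions n"
  by (fastforce simp: transpositions_def)

lemma F_conj_involution:
  assumes "z \<in> F n" "q permutes {1..n}" "q \<circ> q = id"
  shows "q \<circ> z \<circ> q \<in> F n"
proof -
  have qq: "q (q x) = x" for x
    using assms(3) by (simp add: pointfree_idE)
  have "z \<circ> z = id" "z permutes {1..n}" and nofix: "\<forall>i \<in> {1..n}. z i \<noteq> i"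
    using assms(1) by (auto simp: F_def S_def)
  moreover have "q (z (q i)) \<noteq> i" if "i \<in> {1..n}" for i
    by (metis nofix permutes_in_image[OF assms(2)] qq that)
  ultimately show ?thesis
    using assms(2) qq by (auto simp: F_def S_def fun_eq_iff permutes_compose)
qed

definition inversions :: "nat \<Rightarrow> (nat \<Rightarrow> nat) \<Rightarrow> (nat \<times> nat) set" where
  "inversions m p = {(i, j). 1 \<le> i \<and> i < j \<and> j \<le> m \<and> p j < p i}"

lemma len_eq_card_inversions: "len m p = card (inversions m p)"
  by (simp add: len_def inversions_def)

lemma finite_inversions: "finite (inversions m p)"
  by (rule finite_subset[of _ "{1..m} \<times> {1..m}"]) (auto simp: inversions_def)

lemma w0_w0 [simp]: "w0 n (w0 n x) = x"
  by (auto simp: w0_def)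

lemma w0_comp_w0: "w0 n \<circ> w0 n = id"
  by (simp add: fun_eq_iff)

lemma w0_permutes: "w0 n permutes {1..n}"
proof (rule bij_imp_permutes)
  show "bij_betw (w0 n) {1..n} {1..n}"
    by (rule bij_betw_byWitness[where f' = "w0 n"]) (auto simp: w0_def)
qed (auto simp: w0_def)

lemma w0_apply: "1 \<le> i \<Longrightarrow> i \<le> n \<Longrightarrow> w0 n i = n + 1 - i"
  by (simp add: w0_def)

lemma w0_eq_iff: "w0 n x = y \<longleftrightarrow> x = w0 n y"
  by auto

lemma w0_conj_transpose: "w0 n \<circ> transpose i j \<circ> w0 n = transpose (w0 n i) (w0 n j)"
  by (auto simp: fun_eq_iff transpose_def w0_eq_iff)

lemma transpositions_conj_w0:
  assumes "t \<in> transpositions n"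
  shows "w0 n \<circ> t \<circ> w0 n \<in> transpositions n"
proof -
  obtain i j where t: "t = transpose i j" and ij: "1 \<le> i" "i < j" "j \<le> n"
    using assms by (auto simp: transpositions_def)
  then have "w0 n \<circ> t \<circ> w0 n = transpose (n + 1 - j) (n + 1 - i)"
    by (simp add: w0_conj_transpose w0_apply transpose_commute)
  moreover have "1 \<le> n + 1 - j" "n + 1 - j < n + 1 - i" "n + 1 - i \<le> n"
    using ij by auto
  ultimately show ?thesis
    unfolding transpositions_def by blast
qed

lemma inversions_conj_w0:
  assumes "p permutes {1..n}" "(i, j) \<in> inversions n p"
  shows "(n + 1 - j, n + 1 - i) \<in> inversions n (w0 n \<circ> p \<circ> w0 n)"
proof -
  have "i \<in> {1..n}" "j \<in> {1..n}"
    using assms(2) by (auto simp: inversions_def)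
  then have "p i \<in> {1..n}" "p j \<in> {1..n}"
    using permutes_in_image[OF assms(1)] by blast+
  then show ?thesis
    using assms(2) by (auto simp: inversions_def w0_def)
qed

lemma len_conj_w0:
  assumes p: "p permutes {1..n}"
  shows "len n (w0 n \<circ> p \<circ> w0 n) = len n p"
proof -
  let ?reflect = "\<lambda>(i, j). (n + 1 - j, n + 1 - i)"
  let ?p' = "w0 n \<circ> p \<circ> w0 n"
  have inj: "inj_on ?reflect (inversions n q)" for q
    by (auto simp: inj_on_def inversions_def)
  have p': "?p' permutes {1..n}"
    by (intro permutes_compose p w0_permutes)
  have "w0 n \<circ> ?p' \<circ> w0 n = p"
    by (simp add: fun_eq_iff)
  then have "?reflect ` inversions n ?p' \<subseteq> inversions n p"
    using inversions_conj_w0[OF p'] by fastforce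
  moreover have "?reflect ` inversions n p \<subseteq> inversions n ?p'"
    using inversions_conj_w0[OF p] by fastforce
  ultimately show ?thesis
    unfolding len_eq_card_inversions
    by (intro antisym card_inj_on_le[OF inj] finite_inversions)
qed

lemma bruhat_step_conj_w0:
  assumes "bruhat_step n y y'"
  shows "bruhat_step n (w0 n \<circ> y \<circ> w0 n) (w0 n \<circ> y' \<circ> w0 n)"
proof -
  obtain t where y: "y \<in> F n" and t: "t \<in> transpositions n" and y': "y' = t \<circ> y \<circ> t"
    and le: "len n y \<le> len n y'"
    using assms by (auto simp: bruhat_step_def)
  have yp: "y permutes {1..n}"
    using y by (rule F_permutes)
  have y'p: "y' permutes {1..n}"
    unfolding y' by (intro permutes_compose yp transpositions_permutes[OF t])
  let ?t' = "w0 n \<circ> t \<circ> w0 n"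
  have "w0 n \<circ> y' \<circ> w0 n = ?t' \<circ> (w0 n \<circ> y \<circ> w0 n) \<circ> ?t'"
    by (simp add: y' fun_eq_iff)
  moreover have "len n (w0 n \<circ> y \<circ> w0 n) \<le> len n (w0 n \<circ> y' \<circ> w0 n)"
    using le by (simp only: len_conj_w0 yp y'p)
  ultimately show ?thesis
    using F_conj_involution[OF y w0_permutes w0_comp_w0] transpositions_conj_w0[OF t]
    by (auto simp: bruhat_step_def)
qed

lemma s_permutes: "s (Suc m) permutes {1..m + 2}"
  unfolding s_def by (rule permutes_swap_id) auto

lemma permutes_comp_s_commute:
  "p permutes {1..m} \<Longrightarrow> p \<circ> s (Suc m) = s (Suc m) \<circ> p"
  unfolding s_def by (rule permutes_comp_transpose_commute) auto

lemma comp_s_apply: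
  assumes "p permutes {1..m}"
  shows "p (s (Suc m) k) = (if k = Suc m then m + 2 else if k = m + 2 then Suc m else p k)"
  using assms by (auto simp: s_def transpose_def permutes_not_in)

lemma inversions_comp_s:
  assumes p: "p permutes {1..m}"
  shows "inversions (m + 2) (p \<circ> s (Suc m)) = insert (Suc m, m + 2) (inversions m p)"
proof (rule set_eqI, clarify)
  fix i j :: nat
  have p_le: "p k \<le> m" if "1 \<le> k" "k \<le> m" for k
    using that permutes_in_image[OF p, of k] by simp
  consider "j \<le> m" | "j = Suc m" | "j = m + 2" | "m + 2 < j"
    by linarith
  then show "(i, j) \<in> inversions (m + 2) (p \<circ> s (Suc m))
      \<longleftrightarrow> (i, j) \<in> insert (Suc m, m + 2) (inversions m p)"
  proof cases
    case 1
    then show ?thesis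
      by (auto simp: inversions_def comp_s_apply[OF p])
  next
    case 2
    then show ?thesis
      using p_le[of i] by (auto simp: inversions_def comp_s_apply[OF p])
  next
    case 3
    then show ?thesis
      using p_le[of i] by (auto simp: inversions_def comp_s_apply[OF p])
  qed (auto simp: inversions_def)
qed

lemma len_comp_s:
  assumes "p permutes {1..m}"
  shows "len (m + 2) (p \<circ> s (Suc m)) = Suc (len m p)"
proof -
  have notin: "(Suc m, m + 2) \<notin> inversions m p"
    by (simp add: inversions_def)
  have "len (m + 2) (p \<circ> s (Suc m)) = card (insert (Suc m, m + 2) (inversions m p))"
    by (simp only: len_eq_card_inversions inversions_comp_s[OF assms])
  also have "\<dots> = Suc (len m p)"
    using notin by (simp add: finite_inversions len_eq_card_inversions)
  finally show ?thesis .
qed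

lemma F_comp_s:
  assumes z: "z \<in> F m"
  shows "z \<circ> s (Suc m) \<in> F (m + 2)"
proof -
  have zp: "z permutes {1..m}" and zz: "z \<circ> z = id" and nofix: "\<forall>i \<in> {1..m}. z i \<noteq> i"
    using z by (simp_all add: F_def S_def)
  have "z \<circ> s (Suc m) permutes {1..m + 2}"
    using permutes_subset[OF zp] by (intro permutes_compose s_permutes) auto
  moreover have "(z \<circ> s (Suc m)) \<circ> (z \<circ> s (Suc m)) = id"
  proof -
    have "(z \<circ> s (Suc m)) \<circ> (z \<circ> s (Suc m)) = (z \<circ> z) \<circ> (s (Suc m) \<circ> s (Suc m))"
      by (metis comp_assoc permutes_comp_s_commute[OF zp])
    then show ?thesis
      by (simp add: zz s_def)
  qed
  moreover have "z (s (Suc m) i) \<noteq> i" if "i \<in> {1..m + 2}" for i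
  proof -
    have "i \<in> {1..m} \<or> i = Suc m \<or> i = m + 2"
      using that by auto
    then show ?thesis
      using nofix by (auto simp: comp_s_apply[OF zp])
  qed
  ultimately show ?thesis
    by (simp add: F_def S_def)
qed

lemma bruhat_step_comp_s:
  assumes "bruhat_step m y y'"
  shows "bruhat_step (m + 2) (y \<circ> s (Suc m)) (y' \<circ> s (Suc m))"
proof -
  obtain t where y: "y \<in> F m" and t: "t \<in> transpositions m" and y': "y' = t \<circ> y \<circ> t"
    and le: "len m y \<le> len m y'"
    using assms by (auto simp: bruhat_step_def)
  have yp: "y permutes {1..m}"
    using y by (rule F_permutes)
  have tp: "t permutes {1..m}"
    using t by (rule transpositions_permutes)
  then have y'p: "y' permutes {1..m}"
    unfolding y' by (intro permutes_compose yp)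
  have "y' \<circ> s (Suc m) = t \<circ> (y \<circ> s (Suc m)) \<circ> t"
    using permutes_comp_s_commute[OF tp] by (simp add: y' comp_assoc)
  moreover have "t \<in> transpositions (m + 2)"
    using t transpositions_mono[of m "m + 2"] by auto
  moreover have "len (m + 2) (y \<circ> s (Suc m)) \<le> len (m + 2) (y' \<circ> s (Suc m))"
    using le by (simp only: len_comp_s yp y'p Suc_le_mono)
  ultimately show ?thesis
    using F_comp_s[OF y] by (auto simp: bruhat_step_def)
qed

lemma rho_factorization: "rho (m + 2) z = w0 (m + 2) \<circ> (z \<circ> s (Suc m)) \<circ> w0 (m + 2)"
  by (simp add: rho_def comp_assoc)

lemma rho_in_F: "z \<in> F m \<Longrightarrow> rho (m + 2) z \<in> F (m + 2)"
  unfolding rho_factorization by (intro F_conj_involution F_comp_s w0_permutes w0_comp_w0)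

lemma bruhat_step_rho:
  "bruhat_step m y y' \<Longrightarrow> bruhat_step (m + 2) (rho (m + 2) y) (rho (m + 2) y')"
  unfolding rho_factorization by (intro bruhat_step_conj_w0 bruhat_step_comp_s)

lemma bruhatF_rho:
  assumes "bruhatF m z z'"
  shows "bruhatF (m + 2) (rho (m + 2) z) (rho (m + 2) z')"
proof -
  have z: "z \<in> F m" and z': "z' \<in> F m" and chain: "(bruhat_step m)\<^sup>*\<^sup>* z z'"
    using assms by (simp_all add: bruhatF_def)
  show ?thesis
    unfolding bruhatF_def
    using rho_in_F[OF z] rho_in_F[OF z']
      rtranclp_map[of "bruhat_step m" "bruhat_step (m + 2)" "rho (m + 2)", OF bruhat_step_rho chain]
    by blast
qed

lemma rho_cancel: "w0 (m + 2) \<circ> rho (m + 2) z \<circ> w0 (m + 2) \<circ> s (Suc m) = z"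
  by (simp add: rho_def fun_eq_iff s_def)

lemma inj_rho: "inj (rho (m + 2))"
proof (rule injI)
  fix z z'
  assume eq: "rho (m + 2) z = rho (m + 2) z'"
  have "z = w0 (m + 2) \<circ> rho (m + 2) z \<circ> w0 (m + 2) \<circ> s (Suc m)"
    by (rule rho_cancel[symmetric])
  also have "\<dots> = w0 (m + 2) \<circ> rho (m + 2) z' \<circ> w0 (m + 2) \<circ> s (Suc m)"
    by (simp only: eq)
  also have "\<dots> = z'"
    by (rule rho_cancel)
  finally show "z = z'" .
qed

theorem proposition3p2:
  fixes n :: nat
  assumes "even n" and "4 \<le> n"
  shows "Y1 n \<subseteq> F n
    \<and> (\<forall>z \<in> F (n - 2). \<forall>z' \<in> F (n - 2).
         bruhatF (n - 2) z z' \<longrightarrow> bruhatF n (rho n z) (rho n z'))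
    \<and> inj_on (rho n) (F (n - 2))
    \<and> rho n ` F (n - 2) = Y1 n"
proof -
  define m where "m = n - 2"
  have n: "n = m + 2" and m: "n - 2 = m"
    using assms(2) by (simp_all add: m_def)
  have "rho n ` F m \<subseteq> F n"
    unfolding n using rho_in_F by blast
  moreover have "bruhatF n (rho n z) (rho n z')" if "bruhatF m z z'" for z z'
    unfolding n using that by (rule bruhatF_rho)
  moreover have "inj_on (rho n) (F m)"
    unfolding n using inj_rho by (rule inj_on_subset) simp
  ultimately show ?thesis
    unfolding m Y1_def by blast
qed

end
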